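(* Let $m\ge 2$, let $\alpha_1,\dots,\alpha_{m-1}\in\mathbb{C}$, and let $A$ be the $m\times m$ matrix whose rows are indexed by $k=1,\dots,m$ and columns by $l=0,\dots,m-1$, with entries $$A_{k,l}=\sum_{j=0}^{m-1-l}\alpha_k^{\,j+l}F(-m+j)\quad (1\le k\le m-1),\qquad A_{m,l}=\sum_{j=l+1}^{m}(j-l)f(-j).$$ Write $V=\prod_{1\le i<j\le m-1}(\alpha_j-\alpha_i)$ and $e_k=\sum_{1\le j_1<\dots<j_k\le m-1}\alpha_{j_1}\cdots\alpha_{j_k}$ (with $e_0=1$). Then $$\det A=(-1)^{m-1}f(-m)^m\prod_{j=1}^{m-1}(\alpha_j-1)\,V.$$ Moreover, denoting by $M_{m,l+1}$ ($l=0,\dots,m-1$) the minor of $A$ obtained by deleting the last row and the column indexed by $l$, we have $M_{m,1}=f(-m)^{m-1}\,e_{m-1}\,V$ and, for $k=1,\dots,m-1$, $$M_{m,k+1}=f(-m)^{m-1}\,e_{m-1-k}\,V+\sum_{i=1}^{k}(-1)^{k-i}\frac{F(-m+k+1-i)}{f(-m)}M_{m,i}$$ (the latter formulas under the assumption $f(-m)\neq 0$).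
   Context: $X$ and $c\theta$ ($c>0$) are independent, non-negative, integer-valued random variables with $\mathbb{P}(c\theta\le m)=1$. For $j\in\mathbb{Z}$: $f(j)=\mathbb{P}(X-c\theta=j)$ and $F(j)=\mathbb{P}(X-c\theta\le j)$ (so $F(-m)=f(-m)$). *)

theory Defs
  imports "Jordan_Normal_Form.Determinant" "HOL-Probability.Probability_Mass_Function"
begin

text \<open>Distribution of X - c*theta, where X ~ p and c*theta ~ q are independent
  (independence is encoded by the product pmf).\<close>
definition diff_pmf :: "nat pmf \<Rightarrow> nat pmf \<Rightarrow> int pmf" where
  "diff_pmf p q = map_pmf (\<lambda>(x, y). int x - int y) (pair_pmf p q)"

definition fdiff :: "nat pmf \<Rightarrow> nat pmf \<Rightarrow> int \<Rightarrow> real" where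
  "fdiff p q j = pmf (diff_pmf p q) j"

definition Fdiff :: "nat pmf \<Rightarrow> nat pmf \<Rightarrow> int \<Rightarrow> real" where
  "Fdiff p q j = measure_pmf.prob (diff_pmf p q) {..j}"

definition vprod :: "(nat \<Rightarrow> complex) \<Rightarrow> nat \<Rightarrow> complex" where
  "vprod \<alpha> n = (\<Prod>(i, j) \<in> {(i, j). 1 \<le> i \<and> i < j \<and> j \<le> n}. \<alpha> j - \<alpha> i)"

definition esym :: "(nat \<Rightarrow> complex) \<Rightarrow> nat \<Rightarrow> nat \<Rightarrow> complex" where
  "esym \<alpha> n k = (\<Sum>S \<in> {S. S \<subseteq> {1..n} \<and> card S = k}. \<Prod>i\<in>S. \<alpha> i)"

text \<open>The matrix A: row index i = k - 1 (k = 1..m), column index l = 0..m-1.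
  f and F are given as complex-valued functions.\<close>
definition matA :: "nat \<Rightarrow> (nat \<Rightarrow> complex) \<Rightarrow> (int \<Rightarrow> complex) \<Rightarrow> (int \<Rightarrow> complex) \<Rightarrow> complex mat" where
  "matA m \<alpha> f F = Matrix.mat m m (\<lambda>(i, l).
     if i + 1 \<le> m - 1 then (\<Sum>j = 0..m - 1 - l. \<alpha> (i + 1) ^ (j + l) * F (- int m + int j))
     else (\<Sum>j = l + 1..m. of_nat (j - l) * f (- int j)))"

end

theory Submission
  imports Defs
begin

text \<open>Since X - c\<theta> \<ge> -m, F(-m+j) = f(-m) + ... + f(-m+j), and therefore A = W T, where W is the
  Vandermonde matrix of the nodes \<alpha>_1, ..., \<alpha>_(m-1), 1 and T is the lower triangular Toeplitz
  matrix with entries F(-m+s-l); as det T = f(-m)^m, the determinant formula follows from Vandermonde's.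
  Replacing the last node 1 by a variable y does not change the minors M_(m,l+1), so expanding
  det (W(y) T) along its last row and comparing the coefficients of y^s with
  f(-m)^m V \<Prod>_j (y - \<alpha>_j) gives the triangular system
  \<Sum>_(l \<le> s) (-1)^(s-l) F(-m+s-l) M_(m,l+1) = f(-m)^m e_(m-1-s) V, which is solved for the minors.\<close>

definition vandermonde_mat :: "nat \<Rightarrow> (nat \<Rightarrow> 'a :: comm_ring_1) \<Rightarrow> 'a mat" where
  "vandermonde_mat n x = Matrix.mat n n (\<lambda>(i, l). x i ^ l)"

definition lower_toeplitz_mat :: "nat \<Rightarrow> (nat \<Rightarrow> 'a :: comm_ring_1) \<Rightarrow> 'a mat" where
  "lower_toeplitz_mat n g = Matrix.mat n n (\<lambda>(s, l). if l \<le> s then g (s - l) else 0)"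

lemma vandermonde_mat_carrier [simp]: "vandermonde_mat n x \<in> carrier_mat n n"
  by (simp add: vandermonde_mat_def)

lemma lower_toeplitz_mat_carrier [simp]: "lower_toeplitz_mat n g \<in> carrier_mat n n"
  by (simp add: lower_toeplitz_mat_def)

lemma det_lower_toeplitz_mat: "Determinant.det (lower_toeplitz_mat n g) = g 0 ^ n"
  by (subst det_lower_triangular[of n])
     (auto simp: lower_toeplitz_mat_def prod_list_diag_prod)

lemma vandermonde_mat_mult_index:
  assumes "C \<in> carrier_mat n n" "i < n" "l < n"
  shows "(vandermonde_mat n x * C) $$ (i, l) = (\<Sum>s<n. x i ^ s * C $$ (s, l))"
  using assms by (auto simp: vandermonde_mat_def scalar_prod_def lessThan_atLeast0 intro!: sum.cong)

lemma det_scale_rows: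
  fixes B :: "'a :: comm_ring_1 mat"
  assumes B: "B \<in> carrier_mat n n"
  shows "Determinant.det (Matrix.mat n n (\<lambda>(i, l). d i * B $$ (i, l))) = (\<Prod>i<n. d i) * Determinant.det B"
proof -
  let ?D = "Matrix.mat n n (\<lambda>(i, j). if i = j then d i else 0)"
  have "Matrix.mat n n (\<lambda>(i, l). d i * B $$ (i, l)) = ?D * B"
    using B by (intro eq_matI) (auto simp: scalar_prod_def if_distrib[of "\<lambda>a. a * _"] sum.delta' 
      lessThan_atLeast0[symmetric] cong: if_cong)
  moreover have "Determinant.det ?D = (\<Prod>i<n. d i)"
    by (subst det_upper_triangular[of _ n]) (auto simp: prod_list_diag_prod lessThan_atLeast0)
  ultimately show ?thesis
    using det_mult[of ?D n B] B by simp
qed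

lemma vandermonde_mat_column_reduce_index:
  fixes x :: "nat \<Rightarrow> 'a :: comm_ring_1" and y :: 'a and n :: nat
  defines "U \<equiv> Matrix.mat n n (\<lambda>(s, l). if s = l then 1 else if l = Suc s then - y else 0)"
  assumes "i < n" "l < n"
  shows "(vandermonde_mat n x * U) $$ (i, l) = (if l = 0 then 1 else (x i - y) * x i ^ (l - 1))"
proof -
  have "(vandermonde_mat n x * U) $$ (i, l)
      = (\<Sum>s<n. (if s = l then x i ^ s else 0) + (if Suc s = l then - y * x i ^ s else 0))"
    using assms by (subst vandermonde_mat_mult_index) (auto simp: U_def intro!: sum.cong)
  also have "\<dots> = x i ^ l + (\<Sum>s<n. if Suc s = l then - y * x i ^ s else 0)"
    using assms by (simp add: sum.distrib)
  also have "\<dots> = (if l = 0 then 1 else (x i - y) * x i ^ (l - 1))"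
    using assms by (cases l) (auto simp: algebra_simps)
  finally show ?thesis .
qed

lemma det_vandermonde_mat_upd:
  fixes x :: "nat \<Rightarrow> 'a :: comm_ring_1"
  shows "Determinant.det (vandermonde_mat (Suc n) (x(n := y)))
       = Determinant.det (vandermonde_mat n x) * (\<Prod>i<n. y - x i)"
proof -
  define U where "U = Matrix.mat (Suc n) (Suc n) (\<lambda>(s, l). if s = l then 1 else if l = Suc s then - y else (0::'a))"
  \<comment> \<open>subtracting y times each column from the next turns the last row into (1, 0, \<dots>, 0)\<close>
  define C where "C = vandermonde_mat (Suc n) (x(n := y)) * U"
  have U: "U \<in> carrier_mat (Suc n) (Suc n)"
    by (simp add: U_def)
  then have C: "C \<in> carrier_mat (Suc n) (Suc n)"
    unfolding C_def by (rule mult_carrier_mat[OF vandermonde_mat_carrier])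
  have C_index: "C $$ (i, l) = (if l = 0 then 1 else ((x(n := y)) i - y) * (x(n := y)) i ^ (l - 1))"
    if "i < Suc n" "l < Suc n" for i l
    using that unfolding C_def U_def by (rule vandermonde_mat_column_reduce_index)
  have "Determinant.det U = 1"
    by (subst det_upper_triangular[of _ "Suc n"]) (auto simp: U_def prod_list_diag_prod)
  then have "Determinant.det (vandermonde_mat (Suc n) (x(n := y))) = Determinant.det C"
    using det_mult[OF vandermonde_mat_carrier U] by (simp add: C_def)
  also have "\<dots> = (\<Sum>l<Suc n. C $$ (n, l) * cofactor C n l)"
    using C by (rule laplace_expansion_row) simp
  also have "\<dots> = (-1) ^ n * Determinant.det (mat_delete C n 0)"
    by (simp add: C_index cofactor_def lessThan_Suc_eq_insert_0 sum.reindex)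
  also have "mat_delete C n 0 = Matrix.mat n n (\<lambda>(i, l). (x i - y) * vandermonde_mat n x $$ (i, l))"
    using C by (intro eq_matI) (auto simp: mat_delete_def C_index vandermonde_mat_def)
  also have "(-1) ^ n * Determinant.det \<dots> = (\<Prod>i<n. y - x i) * Determinant.det (vandermonde_mat n x)"
  proof -
    have "(\<Prod>i<n. y - x i) = (\<Prod>i<n. (-1) * (x i - y))"
      by simp
    then have "(\<Prod>i<n. y - x i) = (-1) ^ n * (\<Prod>i<n. x i - y)"
      by (simp only: prod.distrib) simp
    then show ?thesis
      by (simp add: det_scale_rows)
  qed
  finally show ?thesis
    by (simp only: mult.commute)
qed

lemma det_vandermonde_mat:
  "Determinant.det (vandermonde_mat n x) = (\<Prod>j<n. \<Prod>i<j. x j - x i)"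
proof (induction n)
  case 0
  then show ?case by (simp add: vandermonde_mat_def det_def')
next
  case (Suc n)
  then show ?case
    using det_vandermonde_mat_upd[of n "x" "x n"] by simp
qed

lemma vprod_eq_det_vandermonde_mat:
  "vprod \<alpha> n = Determinant.det (vandermonde_mat n (\<lambda>i. \<alpha> (Suc i)))"
proof -
  have "vprod \<alpha> n = (\<Prod>(j, i) \<in> (SIGMA j:{..<n}. {..<j}). \<alpha> (Suc j) - \<alpha> (Suc i))"
    unfolding vprod_def
    by (rule prod.reindex_bij_witness[of _ "\<lambda>(j, i). (Suc i, Suc j)" "\<lambda>(i, j). (j - 1, i - 1)"]) auto
  then show ?thesis
    by (simp add: det_vandermonde_mat prod.Sigma)
qed

lemma prod_diff_eq_sum_subsets:
  fixes a :: "'b \<Rightarrow> 'a :: comm_ring_1"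
  assumes K: "finite K"
  shows "(\<Prod>j\<in>K. y - a j)
       = (\<Sum>k\<le>card K. (-1) ^ k * (\<Sum>S | S \<subseteq> K \<and> card S = k. \<Prod>i\<in>S. a i) * y ^ (card K - k))"
proof -
  have "(\<Prod>j\<in>K. y - a j) = (\<Prod>j\<in>K. - a j + y)"
    by simp
  also have "\<dots> = (\<Sum>S\<in>Pow K. (\<Prod>j\<in>S. - a j) * (\<Prod>j\<in>K - S. y))"
    by (rule prod_add[OF K])
  also have "\<dots> = (\<Sum>S\<in>Pow K. (-1) ^ card S * (\<Prod>j\<in>S. a j) * y ^ (card K - card S))"
  proof (rule sum.cong[OF refl])
    fix S assume "S \<in> Pow K"
    then have "S \<subseteq> K" "finite S"
      using K finite_subset by auto
    moreover have "(\<Prod>j\<in>S. - a j) = (\<Prod>j\<in>S. (-1) * a j)"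
      by simp
    ultimately show "(\<Prod>j\<in>S. - a j) * (\<Prod>j\<in>K - S. y) = (-1) ^ card S * (\<Prod>j\<in>S. a j) * y ^ (card K - card S)"
      by (simp only: prod.distrib prod_constant card_Diff_subset)
  qed
  also have "\<dots> = (\<Sum>k\<le>card K. \<Sum>S | S \<in> Pow K \<and> card S = k. (-1) ^ card S * (\<Prod>j\<in>S. a j) * y ^ (card K - card S))"
    by (rule sum.group[symmetric]) (auto simp: K card_mono)
  also have "\<dots> = (\<Sum>k\<le>card K. (-1) ^ k * (\<Sum>S | S \<subseteq> K \<and> card S = k. \<Prod>i\<in>S. a i) * y ^ (card K - k))"
    by (auto simp: sum_distrib_left sum_distrib_right intro!: sum.cong)
  finally show ?thesis .
qed

lemma prod_diff_eq_sum_esym: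
  "(\<Prod>i<n. y - \<alpha> (Suc i)) = (\<Sum>s\<le>n. (-1) ^ (n - s) * esym \<alpha> n (n - s) * y ^ s)"
proof -
  have "(\<Prod>i<n. y - \<alpha> (Suc i)) = (\<Prod>j\<in>{1..n}. y - \<alpha> j)"
    by (simp add: prod.atLeast1_atMost_eq)
  also have "\<dots> = (\<Sum>k\<le>n. (-1) ^ k * esym \<alpha> n k * y ^ (n - k))"
    by (simp add: prod_diff_eq_sum_subsets esym_def)
  also have "\<dots> = (\<Sum>s\<le>n. (-1) ^ (n - s) * esym \<alpha> n (n - s) * y ^ s)"
    by (rule sum.reindex_bij_witness[of _ "\<lambda>s. n - s" "\<lambda>s. n - s"]) auto
  finally show ?thesis .
qed

lemma vandermonde_toeplitz_index:
  assumes "i < n" "l < n"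
  shows "(vandermonde_mat n x * lower_toeplitz_mat n g) $$ (i, l) = (\<Sum>j = 0..n - 1 - l. x i ^ (j + l) * g j)"
proof -
  have "(vandermonde_mat n x * lower_toeplitz_mat n g) $$ (i, l) = (\<Sum>s\<in>{l..<n}. x i ^ s * g (s - l))"
    using assms by (auto simp: vandermonde_mat_mult_index lower_toeplitz_mat_def if_distrib
        cong: if_cong intro!: sum.mono_neutral_cong_right)
  also have "\<dots> = (\<Sum>j = 0..n - 1 - l. x i ^ (j + l) * g j)"
    using assms by (intro sum.reindex_bij_witness[of _ "\<lambda>j. j + l" "\<lambda>s. s - l"]) auto
  finally show ?thesis .
qed

lemma sum_partial_sums:
  fixes h :: "nat \<Rightarrow> 'a :: semiring_1"
  shows "(\<Sum>j = 0..k. \<Sum>i\<le>j. h i) = (\<Sum>i\<le>k. of_nat (k + 1 - i) * h i)"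
proof (induction k)
  case 0
  then show ?case by simp
next
  case (Suc k)
  have "(\<Sum>i\<le>k. of_nat (k + 1 - i) * h i) + (\<Sum>i\<le>Suc k. h i) = (\<Sum>i\<le>k. of_nat (k + 2 - i) * h i) + h (Suc k)"
    by (simp add: sum.distrib[symmetric] Suc_diff_le algebra_simps)
  with Suc show ?case by simp
qed

lemma matA_eq_vandermonde_toeplitz:
  assumes F: "\<And>j. F (- int m + int j) = (\<Sum>i\<le>j. f (- int m + int i))"
  shows "matA m \<alpha> f F = vandermonde_mat m ((\<lambda>i. \<alpha> (Suc i))(m - 1 := 1)) * lower_toeplitz_mat m (\<lambda>j. F (- int m + int j))"
    (is "_ = ?WT")
proof (rule eq_matI)
  fix i l
  assume "i < dim_row ?WT" and "l < dim_col ?WT"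
  then have i: "i < m" and l: "l < m"
    by (simp_all add: vandermonde_mat_def lower_toeplitz_mat_def)
  have last_row: "(\<Sum>j = 0..m - 1 - l. F (- int m + int j)) = (\<Sum>j = l + 1..m. of_nat (j - l) * f (- int j))"
  proof -
    have "(\<Sum>j = 0..m - 1 - l. F (- int m + int j)) = (\<Sum>j = 0..m - 1 - l. \<Sum>i\<le>j. f (- int m + int i))"
      by (simp only: F)
    also have "\<dots> = (\<Sum>i\<le>m - 1 - l. of_nat (m - l - i) * f (- int m + int i))"
      using l by (simp only: sum_partial_sums) (simp add: Suc_diff_Suc)
    also have "\<dots> = (\<Sum>j = l + 1..m. of_nat (j - l) * f (- int j))"
      using l by (intro sum.reindex_bij_witness[of _ "\<lambda>j. m - j" "\<lambda>i. m - i"]) (auto simp: of_nat_diff)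
    finally show ?thesis .
  qed
  show "matA m \<alpha> f F $$ (i, l) = ?WT $$ (i, l)"
    using i l last_row by (auto simp: matA_def vandermonde_toeplitz_index)
qed (simp_all add: matA_def vandermonde_mat_def lower_toeplitz_mat_def)

lemma det_matA:
  assumes "0 < m"
    and F: "\<And>j. F (- int m + int j) = (\<Sum>i\<le>j. f (- int m + int i))"
  shows "Determinant.det (matA m \<alpha> f F)
       = (-1) ^ (m - 1) * f (- int m) ^ m * (\<Prod>j = 1..m - 1. \<alpha> j - 1) * vprod \<alpha> (m - 1)"
proof -
  obtain n where m: "m = Suc n"
    using \<open>0 < m\<close> gr0_implies_Suc by blast
  have "F (- int m) = f (- int m)"
    using F[of 0] by simp
  then have "Determinant.det (matA m \<alpha> f F)
      = Determinant.det (vandermonde_mat (Suc n) ((\<lambda>i. \<alpha> (Suc i))(n := 1))) * f (- int m) ^ m"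
    unfolding matA_eq_vandermonde_toeplitz[OF F]
    by (simp add: det_mult[OF vandermonde_mat_carrier lower_toeplitz_mat_carrier] det_lower_toeplitz_mat m)
  also have "\<dots> = vprod \<alpha> n * (\<Prod>i<n. 1 - \<alpha> (Suc i)) * f (- int m) ^ m"
    by (simp add: det_vandermonde_mat_upd vprod_eq_det_vandermonde_mat)
  also have "(\<Prod>i<n. 1 - \<alpha> (Suc i)) = (-1) ^ n * (\<Prod>j = 1..n. \<alpha> j - 1)"
  proof -
    have "(\<Prod>i<n. 1 - \<alpha> (Suc i)) = (\<Prod>i<n. (-1) * (\<alpha> (Suc i) - 1))"
      by simp
    then show ?thesis
      by (simp only: prod.distrib) (simp add: prod.atLeast1_atMost_eq)
  qed
  finally show ?thesis
    by (simp add: m)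
qed

lemma mat_delete_last_row_cong:
  assumes "A \<in> carrier_mat (Suc n) (Suc n)" "B \<in> carrier_mat (Suc n) (Suc n)"
    and "\<And>i j. i < n \<Longrightarrow> j < Suc n \<Longrightarrow> A $$ (i, j) = B $$ (i, j)"
  shows "mat_delete A n l = mat_delete B n l"
  using assms by (intro eq_matI) (auto simp: mat_delete_def)

lemma det_vandermonde_mult_upd:
  fixes C :: "'a :: comm_ring_1 mat"
  assumes C: "C \<in> carrier_mat (Suc n) (Suc n)"
  shows "Determinant.det (vandermonde_mat (Suc n) (x(n := y)) * C)
       = (\<Sum>s\<le>n. (\<Sum>l\<le>n. C $$ (s, l) * cofactor (vandermonde_mat (Suc n) x * C) n l) * y ^ s)"
proof -
  let ?W = "\<lambda>y. vandermonde_mat (Suc n) (x(n := y)) * C"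
  have W: "?W y \<in> carrier_mat (Suc n) (Suc n)" for y
    using C by (rule mult_carrier_mat[OF vandermonde_mat_carrier])
  have cofactor_eq: "cofactor (?W y) n l = cofactor (vandermonde_mat (Suc n) x * C) n l" for l
  proof -
    have "mat_delete (?W y) n l = mat_delete (?W (x n)) n l"
      using C by (intro mat_delete_last_row_cong W) (simp add: vandermonde_mat_mult_index)
    then show ?thesis
      by (simp add: cofactor_def)
  qed
  have "Determinant.det (?W y) = (\<Sum>l<Suc n. ?W y $$ (n, l) * cofactor (?W y) n l)"
    using W by (rule laplace_expansion_row) simp
  also have "\<dots> = (\<Sum>l\<le>n. (\<Sum>s\<le>n. y ^ s * C $$ (s, l)) * cofactor (vandermonde_mat (Suc n) x * C) n l)"
    using C by (intro sum.cong) (auto simp: vandermonde_mat_mult_index cofactor_eq lessThan_Suc_atMost)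
  also have "\<dots> = (\<Sum>s\<le>n. (\<Sum>l\<le>n. C $$ (s, l) * cofactor (vandermonde_mat (Suc n) x * C) n l) * y ^ s)"
    unfolding sum_distrib_right by (subst sum.swap) (simp add: mult_ac)
  finally show ?thesis .
qed

lemma matA_last_row_cofactors:
  assumes m: "m = Suc n"
    and F: "\<And>j. F (- int m + int j) = (\<Sum>i\<le>j. f (- int m + int i))"
    and "s \<le> n"
  shows "(\<Sum>l\<le>n. lower_toeplitz_mat m (\<lambda>j. F (- int m + int j)) $$ (s, l) * cofactor (matA m \<alpha> f F) n l)
       = f (- int m) ^ m * vprod \<alpha> n * ((-1) ^ (n - s) * esym \<alpha> n (n - s))"
proof -
  define T where "T = lower_toeplitz_mat m (\<lambda>j. F (- int m + int j))"
  define x where "x = (\<lambda>i. \<alpha> (Suc i))(n := 1)"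
  define c where "c = f (- int m) ^ m * vprod \<alpha> n"
  have A: "matA m \<alpha> f F = vandermonde_mat (Suc n) x * T"
    using matA_eq_vandermonde_toeplitz[OF F] by (simp add: m x_def T_def)
  have det_T: "Determinant.det T = f (- int m) ^ m"
    using F[of 0] by (simp add: T_def det_lower_toeplitz_mat)
  have "\<forall>y. (\<Sum>k\<le>n. (\<Sum>l\<le>n. T $$ (k, l) * cofactor (matA m \<alpha> f F) n l) * y ^ k)
      = (\<Sum>k\<le>n. (c * ((-1) ^ (n - k) * esym \<alpha> n (n - k))) * y ^ k)"
  proof
    fix y :: complex
    have "(\<Sum>k\<le>n. (\<Sum>l\<le>n. T $$ (k, l) * cofactor (matA m \<alpha> f F) n l) * y ^ k)
        = Determinant.det (vandermonde_mat (Suc n) (x(n := y)) * T)"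
      unfolding A by (rule det_vandermonde_mult_upd[symmetric]) (simp add: T_def m)
    also have "\<dots> = vprod \<alpha> n * (\<Prod>i<n. y - \<alpha> (Suc i)) * f (- int m) ^ m"
      using det_T by (simp add: det_mult[OF vandermonde_mat_carrier] T_def x_def m
          det_vandermonde_mat_upd vprod_eq_det_vandermonde_mat)
    also have "\<dots> = (\<Sum>k\<le>n. (c * ((-1) ^ (n - k) * esym \<alpha> n (n - k))) * y ^ k)"
      by (simp add: prod_diff_eq_sum_esym sum_distrib_left c_def mult_ac)
    finally show "(\<Sum>k\<le>n. (\<Sum>l\<le>n. T $$ (k, l) * cofactor (matA m \<alpha> f F) n l) * y ^ k)
      = (\<Sum>k\<le>n. (c * ((-1) ^ (n - k) * esym \<alpha> n (n - k))) * y ^ k)" .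
  qed
  then show ?thesis
    using \<open>s \<le> n\<close> by (simp only: polyfun_eq_coeffs T_def c_def)
qed

lemma matA_minors_convolution:
  assumes "0 < m"
    and F: "\<And>j. F (- int m + int j) = (\<Sum>i\<le>j. f (- int m + int i))"
    and "s < m"
  shows "(\<Sum>l\<le>s. (-1) ^ (s - l) * F (- int m + int (s - l)) * Determinant.det (mat_delete (matA m \<alpha> f F) (m - 1) l))
       = f (- int m) ^ m * esym \<alpha> (m - 1) (m - 1 - s) * vprod \<alpha> (m - 1)"
proof -
  obtain n where m: "m = Suc n"
    using \<open>0 < m\<close> gr0_implies_Suc by blast
  have s: "s \<le> n"
    using \<open>s < m\<close> m by simp
  define G where "G = (\<lambda>j. F (- int m + int j))"
  define M where "M l = Determinant.det (mat_delete (matA m \<alpha> f F) n l)" for l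
  define c where "c = f (- int m) ^ m * vprod \<alpha> n"
  have "(\<Sum>l\<le>s. G (s - l) * ((-1) ^ (n + l) * M l))
      = (\<Sum>l\<le>n. lower_toeplitz_mat m G $$ (s, l) * cofactor (matA m \<alpha> f F) n l)"
    using s by (intro sum.mono_neutral_cong_left) (auto simp: lower_toeplitz_mat_def m cofactor_def M_def)
  also have "\<dots> = c * ((-1) ^ (n - s) * esym \<alpha> n (n - s))"
    unfolding G_def c_def using m F s by (rule matA_last_row_cofactors)
  finally have coefficient: "(\<Sum>l\<le>s. G (s - l) * ((-1) ^ (n + l) * M l)) = c * ((-1) ^ (n - s) * esym \<alpha> n (n - s))" .
  have sign: "(-1) ^ (s - l) = (-1) ^ (n - s) * ((-1) ^ (n + l) :: complex)" if "l \<le> s" for l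
    using that s by (auto simp: minus_one_power_iff)
  have "(\<Sum>l\<le>s. (-1) ^ (s - l) * G (s - l) * M l) = (-1) ^ (n - s) * (\<Sum>l\<le>s. G (s - l) * ((-1) ^ (n + l) * M l))"
    unfolding sum_distrib_left by (intro sum.cong refl) (simp add: sign)
  also have "\<dots> = (-1) ^ (n - s) * (-1) ^ (n - s) * (c * esym \<alpha> n (n - s))"
    unfolding coefficient by (simp only: mult_ac)
  also have "(-1) ^ (n - s) * (-1) ^ (n - s) = (1 :: complex)"
    by (simp add: power_add[symmetric])
  finally show ?thesis
    by (simp add: M_def G_def c_def m)
qed

lemma matA_minor_recursion:
  assumes "0 < m"
    and F: "\<And>j. F (- int m + int j) = (\<Sum>i\<le>j. f (- int m + int i))"
    and f: "f (- int m) \<noteq> 0"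
    and "k < m"
  shows "Determinant.det (mat_delete (matA m \<alpha> f F) (m - 1) k)
       = f (- int m) ^ (m - 1) * esym \<alpha> (m - 1) (m - 1 - k) * vprod \<alpha> (m - 1)
         + (\<Sum>i = 1..k. (-1) ^ (k - i) * (F (- int m + int k + 1 - int i) / f (- int m))
             * Determinant.det (mat_delete (matA m \<alpha> f F) (m - 1) (i - 1)))"
proof -
  define M where "M l = Determinant.det (mat_delete (matA m \<alpha> f F) (m - 1) l)" for l
  define b where "b = f (- int m) ^ (m - 1) * esym \<alpha> (m - 1) (m - 1 - k) * vprod \<alpha> (m - 1)"
  define R where "R = (\<Sum>l<k. (-1) ^ (k - l) * F (- int m + int (k - l)) * M l)"
  have "f (- int m) * M k + R = (\<Sum>l\<le>k. (-1) ^ (k - l) * F (- int m + int (k - l)) * M l)"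
    using F[of 0] by (simp add: R_def sum.lessThan_Suc[of _ k, unfolded lessThan_Suc_atMost])
  also have "\<dots> = f (- int m) ^ m * esym \<alpha> (m - 1) (m - 1 - k) * vprod \<alpha> (m - 1)"
    unfolding M_def using \<open>0 < m\<close> F \<open>k < m\<close> by (rule matA_minors_convolution)
  also have "\<dots> = f (- int m) * b"
    using \<open>0 < m\<close> by (simp add: b_def power_eq_if)
  finally have "M k = b - R / f (- int m)"
    using f by (simp add: eq_diff_eq divide_simps mult.commute)
  moreover have "(\<Sum>i = 1..k. (-1) ^ (k - i) * (F (- int m + int k + 1 - int i) / f (- int m)) * M (i - 1))
      = - R / f (- int m)"
  proof -
    have "(-1) ^ (k - Suc l) * (F (- int m + int k + 1 - int (Suc l)) / f (- int m)) * M l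
        = - ((-1) ^ (k - l) * F (- int m + int (k - l)) * M l) / f (- int m)" if "l < k" for l
    proof -
      have "k - l = Suc (k - Suc l)"
        using that by simp
      then have sign: "(-1) ^ (k - l) = - ((-1) ^ (k - Suc l) :: complex)"
        by simp
      have index: "- int m + int k + 1 - int (Suc l) = - int m + int (k - l)"
        using that by simp
      show ?thesis
        unfolding index sign
        by (simp only: mult_minus_left minus_minus minus_divide_left times_divide_eq_right times_divide_eq_left)
    qed
    then show ?thesis
      by (simp add: sum.atLeast1_atMost_eq R_def sum_divide_distrib sum_negf)
  qed
  ultimately show ?thesis
    by (simp add: M_def b_def)
qed

lemma Fdiff_eq_sum_fdiff:
  assumes "set_pmf q \<subseteq> {..m}"
  shows "Fdiff p q (- int m + int j) = (\<Sum>i\<le>j. fdiff p q (- int m + int i))"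
proof -
  have "set_pmf (diff_pmf p q) \<subseteq> {- int m..}"
    using assms by (auto simp: diff_pmf_def set_pair_pmf)
  then have "{..- int m + int j} \<inter> set_pmf (diff_pmf p q) = {- int m..- int m + int j} \<inter> set_pmf (diff_pmf p q)"
    by auto
  then have "Fdiff p q (- int m + int j) = measure_pmf.prob (diff_pmf p q) {- int m..- int m + int j}"
    unfolding Fdiff_def by (metis measure_Int_set_pmf)
  also have "\<dots> = (\<Sum>x\<in>{- int m..- int m + int j}. fdiff p q x)"
    by (simp add: measure_measure_pmf_finite fdiff_def)
  also have "\<dots> = (\<Sum>i\<le>j. fdiff p q (- int m + int i))"
    by (rule sum.reindex_bij_witness[of _ "\<lambda>i. - int m + int i" "\<lambda>x. nat (x + int m)"]) auto
  finally show ?thesis .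
qed

theorem lemma3p2:
  fixes p q :: "nat pmf" and m :: nat and \<alpha> :: "nat \<Rightarrow> complex"
  assumes "m \<ge> 2"
    and "set_pmf q \<subseteq> {..m}"
  defines "f \<equiv> (\<lambda>j. complex_of_real (fdiff p q j))"
    and "F \<equiv> (\<lambda>j. complex_of_real (Fdiff p q j))"
  defines "A \<equiv> matA m \<alpha> f F"
    and "V \<equiv> vprod \<alpha> (m - 1)"
  shows "Determinant.det A = (-1) ^ (m - 1) * f (- int m) ^ m * (\<Prod>j = 1..m - 1. \<alpha> j - 1) * V
         \<and> (f (- int m) \<noteq> 0 \<longrightarrow>
           Determinant.det (mat_delete A (m - 1) 0) = f (- int m) ^ (m - 1) * esym \<alpha> (m - 1) (m - 1) * V
           \<and> (\<forall>k \<in> {1..m - 1}.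
             Determinant.det (mat_delete A (m - 1) k) =
               f (- int m) ^ (m - 1) * esym \<alpha> (m - 1) (m - 1 - k) * V
               + (\<Sum>i = 1..k. (-1) ^ (k - i) * (F (- int m + int k + 1 - int i) / f (- int m))
                   * Determinant.det (mat_delete A (m - 1) (i - 1)))))"
proof -
  have m: "0 < m"
    using \<open>m \<ge> 2\<close> by simp
  have F: "F (- int m + int j) = (\<Sum>i\<le>j. f (- int m + int i))" for j
    using Fdiff_eq_sum_fdiff[OF \<open>set_pmf q \<subseteq> {..m}\<close>] by (simp add: F_def f_def)
  have "Determinant.det (mat_delete A (m - 1) 0) = f (- int m) ^ (m - 1) * esym \<alpha> (m - 1) (m - 1) * V"
    if "f (- int m) \<noteq> 0"
    using matA_minor_recursion[OF m F that, where \<alpha> = \<alpha> and k = 0] m by (simp add: A_def V_def)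
  moreover have "\<forall>k \<in> {1..m - 1}. Determinant.det (mat_delete A (m - 1) k) =
               f (- int m) ^ (m - 1) * esym \<alpha> (m - 1) (m - 1 - k) * V
               + (\<Sum>i = 1..k. (-1) ^ (k - i) * (F (- int m + int k + 1 - int i) / f (- int m))
                   * Determinant.det (mat_delete A (m - 1) (i - 1)))"
    if "f (- int m) \<noteq> 0"
    using matA_minor_recursion[OF m F that, where \<alpha> = \<alpha>] m by (auto simp: A_def V_def)
  ultimately show ?thesis
    using det_matA[OF m F, where \<alpha> = \<alpha>] by (simp add: A_def V_def)
qed

end
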